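(* Let $\mathbf{Z_1},\mathbf{Z_2},\mathbf{Z_3}\in\mathrm{GF}(2)^{6\times 30}$ be constructed from an arbitrary $\mathbf{z}\in\mathrm{GF}(2)^{2\times30}$ as follows: rows 1–2 of $\mathbf{Z_1}$ equal $\mathbf{z}$, rows 3–4 of $\mathbf{Z_1}$ equal $f$ applied to rows 1–2, rows 5–6 of $\mathbf{Z_1}$ equal $f$ applied to rows 3–4, $\mathbf{Z_2}=g(\mathbf{Z_1})$, $\mathbf{Z_3}=g(\mathbf{Z_2})$. Partition the 27 demand vectors $(d_1,d_2,d_3)\in\{A,B,C\}^3$ into five parts: Part 1: $AAA, BBB, CCC$; Part 2: $ABC, BCA, CAB$; Part 3: $ACB, CBA, BAC$; Part 4: $ABB, BAB, BBA, BCC, CBC, CCB, CAA, ACA, AAC$; Part 5: $ACC, CAC, CCA, CBB, BCB, BBC, BAA, ABA, AAB$. Then for any two demand vectors $D,D'$ in the same part, there is a column permutation $\pi$ in the group generated by $f$ and $g$ such that for every binary matrix $\mathbf{X}$ with 30 columns, if $\mathbf{X}$ is a valid delivery matrix for demand $D$ then $\pi(\mathbf{X})$ is a valid delivery matrix for demand $D'$ (and has the same number of rows).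
   Context: Three files $A=W_1$, $B=W_2$, $C=W_3$ are each split into 10 subfiles $A_1,\dots,A_{10}$, $B_1,\dots,B_{10}$, $C_1,\dots,C_{10}$, i.i.d. uniform; the information vector is $\mathbf{W}=[A_1,\dots,A_{10},B_1,\dots,B_{10},C_1,\dots,C_{10}]$, and a binary matrix $\mathbf{G}$ with 30 columns represents the linear code $\mathbf{G}\mathbf{W}^T$. Let $\mathbf{W_A}=[I_{10}\ 0\ 0]$, $\mathbf{W_B}=[0\ I_{10}\ 0]$, $\mathbf{W_C}=[0\ 0\ I_{10}]$ be the generator matrices of the files. User $i\in\{1,2,3\}$ caches $\mathbf{Z_i}\mathbf{W}^T$. For a demand vector $D=(d_1,d_2,d_3)\in\{A,B,C\}^3$ (user $i$ requests file $d_i$), a binary matrix $\mathbf{X}$ with 30 columns is a valid delivery matrix for $D$ if for each $i=1,2,3$, user $i$ can recover file $d_i$ from its cache and $\mathbf{X}\mathbf{W}^T$, i.e., $\operatorname{rank}\begin{bmatrix}\mathbf{Z_i}\\ \mathbf{X}\end{bmatrix}=\operatorname{rank}\begin{bmatrix}\mathbf{Z_i}\\ \mathbf{W_{d_i}}\\ \mathbf{X}\end{bmatrix}$ over $\mathrm{GF}(2)$. Column operations (applied to each row of a matrix with 30 columns): $f$ moves the coefficient of $A_i$ to the position of $B_i$, of $B_i$ to $C_i$, and of $C_i$ to $A_i$ ($i=1,\dots,10$), i.e., relabels files $A\mapsto B\mapsto C\mapsto A$; $g$ moves, within each file, the coefficient of subfile $i$ to subfile $i+3$ reduced into $\{1,\dots,9\}$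 modulo 9 (so $7\mapsto1$, $8\mapsto2$, $9\mapsto3$) for $1\le i\le 9$, and fixes subfile $10$. *)

theory Defs
  imports "HOL-Analysis.Analysis" "HOL-Library.Z2" "HOL-Library.Numeral_Type"
begin

text \<open>GF(2) is the field \<open>bit\<close> of HOL-Library.Z2. Columns are numbered 0..29 (as naturals; column \<open>c\<close> is the
  element \<open>of_nat c :: 30\<close>): column \<open>10*k + (i-1)\<close> holds the coefficient of subfile
  \<open>i\<close> (1..10) of file \<open>k\<close> (0 = A, 1 = B, 2 = C), matching
  W = [A_1..A_10, B_1..B_10, C_1..C_10].\<close>

type_synonym row = "bit ^ 30"
type_synonym gmat = "row list"

datatype cfile = FA | FB | FC

definition file_idx :: "cfile \<Rightarrow> nat" where
  "file_idx d = (case d of FA \<Rightarrow> 0 | FB \<Rightarrow> 1 | FC \<Rightarrow> 2)"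

definition grank :: "gmat \<Rightarrow> nat" where
  "grank M = vec.dim (set M)"

definition W_file :: "cfile \<Rightarrow> gmat" where
  "W_file d = map (\<lambda>s. axis (of_nat (10 * file_idx d + s) :: 30) (1::bit)) [0..<10]"

definition col_nat :: "30 \<Rightarrow> nat" where
  "col_nat j = nat (Rep_bit0 j)"

definition col_perm :: "(nat \<Rightarrow> nat) \<Rightarrow> 30 \<Rightarrow> 30" where
  "col_perm \<sigma> j = of_nat (\<sigma> (col_nat j))"

text \<open>Column operation: the coefficient in column c is moved to column \<sigma> c.\<close>
definition permute_row :: "(30 \<Rightarrow> 30) \<Rightarrow> row \<Rightarrow> row" where
  "permute_row p r = (\<chi> j. r $ (inv p j))"

definition permute_mat :: "(30 \<Rightarrow> 30) \<Rightarrow> gmat \<Rightarrow> gmat" where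
  "permute_mat p M = map (permute_row p) M"

text \<open>f: A_i \<mapsto> B_i \<mapsto> C_i \<mapsto> A_i (column c moves to c+10 mod 30).\<close>
definition f_pos :: "nat \<Rightarrow> nat" where
  "f_pos c = (c + 10) mod 30"

text \<open>g: within each cfile, subfile i (1..9) moves to ((i+3-1) mod 9)+1, subfile 10 fixed.
  In 0-based subfile index s = i-1: s \<mapsto> (s+3) mod 9 for s < 9, and 9 fixed.\<close>
definition g_pos :: "nat \<Rightarrow> nat" where
  "g_pos c = 10 * (c div 10) + (if c mod 10 = 9 then 9 else (c mod 10 + 3) mod 9)"

definition f_perm :: "30 \<Rightarrow> 30" where "f_perm = col_perm f_pos"
definition g_perm :: "30 \<Rightarrow> 30" where "g_perm = col_perm g_pos"

abbreviation f_op :: "row \<Rightarrow> row" where "f_op \<equiv> permute_row f_perm"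
abbreviation g_op :: "row \<Rightarrow> row" where "g_op \<equiv> permute_row g_perm"

inductive_set gen_fg :: "(30 \<Rightarrow> 30) set" where
  gen_id: "id \<in> gen_fg"
| gen_f: "p \<in> gen_fg \<Longrightarrow> f_perm \<circ> p \<in> gen_fg"
| gen_g: "p \<in> gen_fg \<Longrightarrow> g_perm \<circ> p \<in> gen_fg"
| gen_f_inv: "p \<in> gen_fg \<Longrightarrow> inv f_perm \<circ> p \<in> gen_fg"
| gen_g_inv: "p \<in> gen_fg \<Longrightarrow> inv g_perm \<circ> p \<in> gen_fg"

definition Z1 :: "row \<Rightarrow> row \<Rightarrow> gmat" where
  "Z1 z1 z2 = [z1, z2, f_op z1, f_op z2, f_op (f_op z1), f_op (f_op z2)]"
definition Z2 :: "row \<Rightarrow> row \<Rightarrow> gmat" where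
  "Z2 z1 z2 = map g_op (Z1 z1 z2)"
definition Z3 :: "row \<Rightarrow> row \<Rightarrow> gmat" where
  "Z3 z1 z2 = map g_op (Z2 z1 z2)"

text \<open>User recovers cfile d from cache Z and delivery X.\<close>
definition decodable :: "gmat \<Rightarrow> cfile \<Rightarrow> gmat \<Rightarrow> bool" where
  "decodable Z d X \<longleftrightarrow> grank (Z @ X) = grank (Z @ W_file d @ X)"

definition valid_delivery :: "row \<Rightarrow> row \<Rightarrow> cfile \<times> cfile \<times> cfile \<Rightarrow> gmat \<Rightarrow> bool" where
  "valid_delivery z1 z2 D X \<longleftrightarrow>
     (case D of (d1, d2, d3) \<Rightarrow>
        decodable (Z1 z1 z2) d1 X \<and> decodable (Z2 z1 z2) d2 X \<and> decodable (Z3 z1 z2) d3 X)"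

definition demand_parts :: "(cfile \<times> cfile \<times> cfile) set set" where
  "demand_parts = {
     {(FA,FA,FA), (FB,FB,FB), (FC,FC,FC)},
     {(FA,FB,FC), (FB,FC,FA), (FC,FA,FB)},
     {(FA,FC,FB), (FC,FB,FA), (FB,FA,FC)},
     {(FA,FB,FB), (FB,FA,FB), (FB,FB,FA), (FB,FC,FC), (FC,FB,FC), (FC,FC,FB),
      (FC,FA,FA), (FA,FC,FA), (FA,FA,FC)},
     {(FA,FC,FC), (FC,FA,FC), (FC,FC,FA), (FC,FB,FB), (FB,FC,FB), (FB,FB,FC),
      (FB,FA,FA), (FA,FB,FA), (FA,FA,FB)} }"

end

theory Submission
  imports Defs
begin

text \<open>A column permutation is an invertible linear map on rows, so it preserves ranks, and it
  carries decodability of file \<open>d\<close> from cache \<open>Z\<close> to decodability of \<open>d'\<close> from \<open>Z'\<close> once it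
  maps the rows of \<open>Z\<close> onto those of \<open>Z'\<close> and the generator of \<open>d\<close> onto that of \<open>d'\<close>.
  Since \<open>f\<close> has order 3 and commutes with \<open>g\<close>, it permutes the rows of every cache while
  relabelling the files \<open>A \<mapsto> B \<mapsto> C \<mapsto> A\<close>; \<open>g\<close> has order 3, cycles the caches
  \<open>Z\<^sub>1 \<mapsto> Z\<^sub>2 \<mapsto> Z\<^sub>3 \<mapsto> Z\<^sub>1\<close> and maps every file onto itself.
  So \<open>f\<close> and \<open>g\<close> turn a valid delivery for \<open>(d\<^sub>1, d\<^sub>2, d\<^sub>3)\<close> into one for the relabelled
  demand and for \<open>(d\<^sub>3, d\<^sub>1, d\<^sub>2)\<close> respectively. Each part is an orbit of the group generated
  by these two commuting demand maps of order 3, so any two of its demands are linked by a chain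
  of such steps.\<close>

lemma col_nat_of_nat: "c < 30 \<Longrightarrow> col_nat (of_nat c :: 30) = c"
  by (simp add: col_nat_def bit0.of_nat_eq Abs_bit0_inverse)

lemma col_nat_less: "col_nat (j :: 30) < 30"
  using Rep_bit0[of j] by (simp add: col_nat_def nat_less_iff)

lemma of_nat_col_nat: "of_nat (col_nat j) = (j :: 30)"
  using Rep_bit0[of j] by (simp add: col_nat_def bit0.of_nat_eq Rep_bit0_inverse)

lemma col_perm_of_nat: "c < 30 \<Longrightarrow> col_perm \<sigma> (of_nat c) = of_nat (\<sigma> c)"
  by (simp add: col_perm_def col_nat_of_nat)

lemma col_perm_comp:
  assumes "\<And>c. c < 30 \<Longrightarrow> \<tau> c < 30"
  shows "col_perm \<sigma> \<circ> col_perm \<tau> = col_perm (\<sigma> \<circ> \<tau>)"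
  by (rule ext) (simp add: col_perm_def col_nat_of_nat col_nat_less assms)

lemma col_perm_cong: "(\<And>c. c < 30 \<Longrightarrow> \<sigma> c = \<tau> c) \<Longrightarrow> col_perm \<sigma> = col_perm \<tau>"
  by (rule ext) (simp add: col_perm_def col_nat_less)

lemma col_perm_id: "col_perm id = id"
  by (rule ext) (simp add: col_perm_def of_nat_col_nat)

lemma less_30_cases:
  "c < (30 :: nat) \<Longrightarrow> c \<in> {0, 1, 2, 3, 4, 5, 6, 7, 8, 9, 10, 11, 12, 13, 14, 15, 16, 17, 18, 19,
                          20, 21, 22, 23, 24, 25, 26, 27, 28, 29}"
  unfolding insert_iff empty_iff by presburger

lemma f_pos_less: "f_pos c < 30"
  by (simp add: f_pos_def)

lemma f_pos_cube: "c < 30 \<Longrightarrow> f_pos (f_pos (f_pos c)) = c"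
  by (simp add: f_pos_def mod_add_left_eq)

lemma g_pos_less: "c < 30 \<Longrightarrow> g_pos c < 30"
  by (drule less_30_cases) (elim insertE emptyE; simp add: g_pos_def)

lemma g_pos_cube: "c < 30 \<Longrightarrow> g_pos (g_pos (g_pos c)) = c"
  by (drule less_30_cases) (elim insertE emptyE; simp add: g_pos_def)

lemma f_pos_g_pos_commute: "c < 30 \<Longrightarrow> f_pos (g_pos c) = g_pos (f_pos c)"
  by (drule less_30_cases) (elim insertE emptyE; simp add: f_pos_def g_pos_def)

lemma f_perm_cube: "f_perm \<circ> f_perm \<circ> f_perm = id"
proof -
  have "f_perm \<circ> f_perm \<circ> f_perm = col_perm (f_pos \<circ> f_pos \<circ> f_pos)"
    by (simp add: f_perm_def col_perm_comp f_pos_less)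
  also have "\<dots> = col_perm id"
    by (rule col_perm_cong) (simp add: f_pos_cube)
  finally show ?thesis
    by (simp add: col_perm_id)
qed

lemma g_perm_cube: "g_perm \<circ> g_perm \<circ> g_perm = id"
proof -
  have "g_perm \<circ> g_perm \<circ> g_perm = col_perm (g_pos \<circ> g_pos \<circ> g_pos)"
    by (simp add: g_perm_def col_perm_comp g_pos_less)
  also have "\<dots> = col_perm id"
    by (rule col_perm_cong) (simp add: g_pos_cube)
  finally show ?thesis
    by (simp add: col_perm_id)
qed

lemma f_perm_g_perm_commute: "f_perm \<circ> g_perm = g_perm \<circ> f_perm"
proof -
  have "f_perm \<circ> g_perm = col_perm (f_pos \<circ> g_pos)"
    by (simp add: f_perm_def g_perm_def col_perm_comp g_pos_less)
  also have "\<dots> = col_perm (g_pos \<circ> f_pos)"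
    by (rule col_perm_cong) (simp add: f_pos_g_pos_commute)
  also have "\<dots> = g_perm \<circ> f_perm"
    by (simp add: f_perm_def g_perm_def col_perm_comp f_pos_less)
  finally show ?thesis .
qed

lemma bij_if_cube_id: "p \<circ> p \<circ> p = id \<Longrightarrow> bij p"
  by (metis o_bij comp_assoc)

lemma bij_f_perm: "bij f_perm"
  using f_perm_cube by (rule bij_if_cube_id)

lemma bij_g_perm: "bij g_perm"
  using g_perm_cube by (rule bij_if_cube_id)

lemma permute_row_id: "permute_row id = id"
  by (simp add: permute_row_def inv_id fun_eq_iff)

lemma permute_row_comp:
  "bij p \<Longrightarrow> bij q \<Longrightarrow> permute_row (p \<circ> q) r = permute_row p (permute_row q r)"
  by (simp add: permute_row_def o_inv_distrib)

lemma permute_row_axis: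
  assumes "bij p"
  shows "permute_row p (axis a x) = axis (p a) x"
proof -
  have "inv p j = a \<longleftrightarrow> j = p a" for j
    using assms by (metis bij_inv_eq_iff)
  then show ?thesis
    by (simp add: permute_row_def axis_def vec_eq_iff)
qed

lemma permute_mat_comp:
  "bij p \<Longrightarrow> bij q \<Longrightarrow> permute_mat (p \<circ> q) X = permute_mat p (permute_mat q X)"
  by (simp add: permute_mat_def permute_row_comp)

lemma f_op_cube: "f_op (f_op (f_op r)) = r"
  using permute_row_comp[OF bij_comp[OF bij_f_perm bij_f_perm] bij_f_perm, of r]
  by (simp add: f_perm_cube permute_row_comp bij_f_perm permute_row_id)

lemma g_op_cube: "g_op (g_op (g_op r)) = r"
  using permute_row_comp[OF bij_comp[OF bij_g_perm bij_g_perm] bij_g_perm, of r]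
  by (simp add: g_perm_cube permute_row_comp bij_g_perm permute_row_id)

lemma f_op_g_op_commute: "f_op (g_op r) = g_op (f_op r)"
  by (metis f_perm_g_perm_commute permute_row_comp bij_f_perm bij_g_perm)

lemma linear_permute_row: "Vector_Spaces.linear (*s) (*s) (permute_row p)"
  by unfold_locales (simp_all add: permute_row_def vec_eq_iff algebra_simps)

lemma inj_permute_row:
  assumes "bij p"
  shows "inj (permute_row p)"
proof (rule inj_on_inverseI)
  fix r
  show "permute_row (inv p) (permute_row p r) = r"
    using permute_row_comp[OF bij_imp_bij_inv[OF assms] assms, of r] assms
    by (simp add: bij_is_inj permute_row_id)
qed

lemma grank_permute_row: "bij p \<Longrightarrow> grank (map (permute_row p) M) = grank M"
  unfolding grank_def set_map
  by (rule vec.dim_image_eq[OF linear_permute_row]) (meson inj_permute_row inj_on_subset subset_UNIV)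

lemma decodable_permute:
  assumes p: "bij p"
    and cache: "permute_row p ` set Z = set Z'"
    and files: "permute_row p ` set (W_file d) = set (W_file d')"
    and "decodable Z d X"
  shows "decodable Z' d' (permute_mat p X)"
proof -
  have "grank (Z' @ permute_mat p X) = grank (Z @ X)"
    using grank_permute_row[OF p, of "Z @ X"] cache
    by (simp add: grank_def permute_mat_def image_Un)
  moreover have "grank (Z' @ W_file d' @ permute_mat p X) = grank (Z @ W_file d @ X)"
    using grank_permute_row[OF p, of "Z @ W_file d @ X"] cache files
    by (simp add: grank_def permute_mat_def image_Un)
  ultimately show ?thesis
    using \<open>decodable Z d X\<close> by (simp add: decodable_def)
qed

fun next_file :: "cfile \<Rightarrow> cfile" where
  "next_file FA = FB"
| "next_file FB = FC"
| "next_file FC = FA"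

lemma file_col_less: "s < 10 \<Longrightarrow> 10 * file_idx d + s < 30"
  by (cases d) (simp_all add: file_idx_def)

lemma f_pos_file_col: "s < 10 \<Longrightarrow> f_pos (10 * file_idx d + s) = 10 * file_idx (next_file d) + s"
  by (cases d) (simp_all add: f_pos_def file_idx_def)

lemma g_pos_file_col:
  "s < 10 \<Longrightarrow> g_pos (10 * k + s) = 10 * k + (if s = 9 then 9 else (s + 3) mod 9)"
  by (simp add: g_pos_def)

lemma f_perm_file_col:
  "s < 10 \<Longrightarrow> f_perm (of_nat (10 * file_idx d + s)) = of_nat (10 * file_idx (next_file d) + s)"
  by (simp add: f_perm_def col_perm_of_nat file_col_less f_pos_file_col del: of_nat_add of_nat_mult)

lemma g_perm_file_col:
  "s < 10 \<Longrightarrow> g_perm (of_nat (10 * file_idx d + s)) =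
     of_nat (10 * file_idx d + (if s = 9 then 9 else (s + 3) mod 9))"
  by (simp add: g_perm_def col_perm_of_nat file_col_less g_pos_file_col del: of_nat_add of_nat_mult)

lemma map_f_op_W_file: "map f_op (W_file d) = W_file (next_file d)"
  by (simp add: W_file_def permute_row_axis bij_f_perm f_perm_file_col
      del: of_nat_add of_nat_mult cong: map_cong)

lemma image_eq_if_cube_id:
  assumes "\<And>x. h (h (h x)) = x" and "h ` S \<subseteq> S"
  shows "h ` S = S"
proof
  show "S \<subseteq> h ` S"
  proof
    fix x assume "x \<in> S"
    then have "h (h x) \<in> S" using assms(2) by blast
    then show "x \<in> h ` S" using assms(1)[of x] by (metis image_eqI)
  qed
qed (fact assms(2))

lemma g_op_image_W_file: "g_op ` set (W_file d) = set (W_file d)"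
proof (rule image_eq_if_cube_id[OF g_op_cube])
  have "g_op (axis (of_nat (10 * file_idx d + s)) 1) \<in> set (W_file d)" if "s < 10" for s
    using that
    by (auto simp: W_file_def permute_row_axis bij_g_perm g_perm_file_col simp del: of_nat_add of_nat_mult)
  then show "g_op ` set (W_file d) \<subseteq> set (W_file d)"
    by (auto simp: W_file_def simp del: of_nat_add of_nat_mult)
qed

lemma f_op_image_Z1: "f_op ` set (Z1 z1 z2) = set (Z1 z1 z2)"
  by (auto simp: Z1_def f_op_cube)

lemma f_op_image_Z2: "f_op ` set (Z2 z1 z2) = set (Z2 z1 z2)"
proof -
  have "f_op ` set (Z2 z1 z2) = g_op ` f_op ` set (Z1 z1 z2)"
    by (simp add: Z2_def image_image f_op_g_op_commute)
  then show ?thesis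
    by (simp add: f_op_image_Z1 Z2_def)
qed

lemma f_op_image_Z3: "f_op ` set (Z3 z1 z2) = set (Z3 z1 z2)"
proof -
  have "f_op ` set (Z3 z1 z2) = g_op ` f_op ` set (Z2 z1 z2)"
    by (simp add: Z3_def image_image f_op_g_op_commute)
  then show ?thesis
    by (simp add: f_op_image_Z2 Z3_def)
qed

lemma map_g_op_Z3: "map g_op (Z3 z1 z2) = Z1 z1 z2"
  by (simp add: Z3_def Z2_def Z1_def g_op_cube)

type_synonym demand = "cfile \<times> cfile \<times> cfile"

fun relabel_demand :: "demand \<Rightarrow> demand" where
  "relabel_demand (d1, d2, d3) = (next_file d1, next_file d2, next_file d3)"

fun rotate_demand :: "demand \<Rightarrow> demand" where
  "rotate_demand (d1, d2, d3) = (d3, d1, d2)"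

lemma valid_delivery_f_perm:
  assumes "valid_delivery z1 z2 D X"
  shows "valid_delivery z1 z2 (relabel_demand D) (permute_mat f_perm X)"
proof -
  obtain d1 d2 d3 where D: "D = (d1, d2, d3)" by (cases D)
  have W: "f_op ` set (W_file d) = set (W_file (next_file d))" for d
    by (simp flip: map_f_op_W_file)
  show ?thesis
    using assms
    by (auto simp: D valid_delivery_def
        intro: decodable_permute[OF bij_f_perm f_op_image_Z1 W]
               decodable_permute[OF bij_f_perm f_op_image_Z2 W]
               decodable_permute[OF bij_f_perm f_op_image_Z3 W])
qed

lemma valid_delivery_g_perm:
  assumes "valid_delivery z1 z2 D X"
  shows "valid_delivery z1 z2 (rotate_demand D) (permute_mat g_perm X)"
proof -
  obtain d1 d2 d3 where D: "D = (d1, d2, d3)" by (cases D)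
  have Z1: "g_op ` set (Z3 z1 z2) = set (Z1 z1 z2)"
    by (simp flip: map_g_op_Z3)
  have Z2: "g_op ` set (Z1 z1 z2) = set (Z2 z1 z2)"
    by (simp add: Z2_def)
  have Z3: "g_op ` set (Z2 z1 z2) = set (Z3 z1 z2)"
    by (simp add: Z3_def)
  show ?thesis
    using assms
    by (auto simp: D valid_delivery_def
        intro: decodable_permute[OF bij_g_perm Z1 g_op_image_W_file]
               decodable_permute[OF bij_g_perm Z2 g_op_image_W_file]
               decodable_permute[OF bij_g_perm Z3 g_op_image_W_file])
qed

lemma bij_of_gen_fg: "p \<in> gen_fg \<Longrightarrow> bij p"
  by (induction rule: gen_fg.induct)
    (blast intro: bij_id bij_comp bij_f_perm bij_g_perm bij_imp_bij_inv)+

inductive_set demand_step :: "(demand \<times> demand) set" where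
  relabel: "(D, relabel_demand D) \<in> demand_step"
| rotate: "(D, rotate_demand D) \<in> demand_step"

lemma demand_step_transfers:
  assumes "(D, D') \<in> demand_step\<^sup>*"
  shows "\<exists>p \<in> gen_fg. \<forall>X. valid_delivery z1 z2 D X \<longrightarrow> valid_delivery z1 z2 D' (permute_mat p X)"
  using assms
proof (induction rule: rtrancl_induct)
  case base
  have "permute_mat id X = X" for X
    by (simp add: permute_mat_def permute_row_id)
  then show ?case
    using gen_id by metis
next
  case (step E E')
  then obtain p where p: "p \<in> gen_fg"
    and valid: "\<And>X. valid_delivery z1 z2 D X \<Longrightarrow> valid_delivery z1 z2 E (permute_mat p X)"
    by blast
  from step.hyps(2) show ?case
  proof cases
    case relabel
    then show ?thesis
      using gen_f[OF p] valid valid_delivery_f_perm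
      by (metis permute_mat_comp bij_f_perm bij_of_gen_fg[OF p])
  next
    case rotate
    then show ?thesis
      using gen_g[OF p] valid valid_delivery_g_perm
      by (metis permute_mat_comp bij_g_perm bij_of_gen_fg[OF p])
  qed
qed

lemma relabel_demand_cube: "relabel_demand (relabel_demand (relabel_demand D)) = D"
proof -
  have "next_file (next_file (next_file d)) = d" for d
    by (cases d) simp_all
  then show ?thesis
    by (cases D) simp
qed

lemma rotate_demand_cube: "rotate_demand (rotate_demand (rotate_demand D)) = D"
  by (cases D) simp

lemma converse_rtrancl_if_cube_id:
  assumes "\<And>x. h (h (h x)) = x" and "\<And>x. (x, h x) \<in> r"
  shows "(h x, x) \<in> r\<^sup>*"
proof -
  have "(h x, h (h (h x))) \<in> r\<^sup>*"
    using assms(2) by (meson r_into_rtrancl rtrancl_into_rtrancl)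
  then show ?thesis
    using assms(1) by simp
qed

lemma demand_step_rtrancl_sym: "(D, D') \<in> demand_step\<^sup>* \<Longrightarrow> (D', D) \<in> demand_step\<^sup>*"
proof (induction rule: rtrancl_induct)
  case (step E E')
  from step.hyps(2) have "(E', E) \<in> demand_step\<^sup>*"
    by cases (auto intro: converse_rtrancl_if_cube_id relabel_demand_cube rotate_demand_cube
        demand_step.intros)
  then show ?case
    using step.IH by (rule rtrancl_trans)
qed simp

definition demand_orbit :: "demand \<Rightarrow> demand set" where
  "demand_orbit D =
     (\<lambda>(a, b). (relabel_demand ^^ a) ((rotate_demand ^^ b) D)) ` ({0, 1, 2} \<times> {0, 1, 2})"

lemma demand_orbit_imp_rtrancl: "E \<in> demand_orbit D \<Longrightarrow> (D, E) \<in> demand_step\<^sup>*"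
proof -
  have rotations: "(D, (rotate_demand ^^ b) D) \<in> demand_step\<^sup>*" for b
    by (induction b) (auto intro: rtrancl_into_rtrancl demand_step.rotate)
  have "(D, (relabel_demand ^^ a) ((rotate_demand ^^ b) D)) \<in> demand_step\<^sup>*" for a b
    by (induction a) (auto intro: rtrancl_into_rtrancl demand_step.relabel rotations)
  then show "E \<in> demand_orbit D \<Longrightarrow> ?thesis"
    unfolding demand_orbit_def by (auto simp only: image_iff case_prod_beta)
qed

lemma demand_parts_subset_orbit: "P \<in> demand_parts \<Longrightarrow> \<exists>D. P \<subseteq> demand_orbit D"
  unfolding demand_parts_def
  apply (elim insertE emptyE)
      apply (rule exI[of _ "(FA, FA, FA)"]; simp add: demand_orbit_def eval_nat_numeral)
     apply (rule exI[of _ "(FA, FB, FC)"]; simp add: demand_orbit_def eval_nat_numeral)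
    apply (rule exI[of _ "(FA, FC, FB)"]; simp add: demand_orbit_def eval_nat_numeral)
   apply (rule exI[of _ "(FA, FB, FB)"]; simp add: demand_orbit_def eval_nat_numeral)
  apply (rule exI[of _ "(FA, FC, FC)"]; simp add: demand_orbit_def eval_nat_numeral)
  done

theorem lemma1:
  fixes z1 z2 :: row
  assumes "P \<in> demand_parts" and "D \<in> P" and "D' \<in> P"
  shows "\<exists>p \<in> gen_fg. \<forall>X :: gmat.
           valid_delivery z1 z2 D X \<longrightarrow>
             valid_delivery z1 z2 D' (permute_mat p X) \<and> length (permute_mat p X) = length X"
proof -
  obtain D0 where "P \<subseteq> demand_orbit D0"
    using demand_parts_subset_orbit[OF assms(1)] by blast
  then have "(D0, D) \<in> demand_step\<^sup>*" and "(D0, D') \<in> demand_step\<^sup>*"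
    using assms(2,3) demand_orbit_imp_rtrancl by blast+
  then have "(D, D') \<in> demand_step\<^sup>*"
    by (meson demand_step_rtrancl_sym rtrancl_trans)
  then show ?thesis
    using demand_step_transfers by (simp add: permute_mat_def)
qed

end
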